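(* For every integer $n \geq 5$, the Roman domination number of the generalized Petersen graph $P(n,2)$ is $$\gamma_R(P(n,2)) = \left\lceil \frac{8n}{7} \right\rceil .$$
   Context: For integers $n \ge 3$ and $1 \le k < n/2$, the generalized Petersen graph $P(n,k)$ has vertex set $\{v_i, u_i : 0 \le i \le n-1\}$ and edge set $\{v_iv_{i+1},\ v_iu_i,\ u_iu_{i+k} : 0 \le i \le n-1\}$, with subscripts taken modulo $n$. A Roman domination function (RDF) of a graph $G$ is a function $f: V(G)\to\{0,1,2\}$ such that every vertex $u$ with $f(u)=0$ is adjacent to at least one vertex $v$ with $f(v)=2$. Its weight is $\sum_{u\in V(G)} f(u)$. The Roman domination number $\gamma_R(G)$ is the minimum weight of an RDF of $G$. *)

theory Defs
  imports Complex_Main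
begin

(* Generalized Petersen graph P(n,k).
   Vertex (False, i) represents v_i, vertex (True, i) represents u_i, for 0 <= i < n. *)
definition gp_vertices :: "nat \<Rightarrow> (bool \<times> nat) set" where
  "gp_vertices n = UNIV \<times> {..<n}"

definition gp_edge :: "nat \<Rightarrow> nat \<Rightarrow> bool \<times> nat \<Rightarrow> bool \<times> nat \<Rightarrow> bool" where
  "gp_edge n k x y \<longleftrightarrow>
     (\<exists>i<n.
        ({x, y} = {(False, i), (False, (i + 1) mod n)}) \<or>
        ({x, y} = {(False, i), (True, i)}) \<or>
        ({x, y} = {(True, i), (True, (i + k) mod n)}))"

definition is_rdf :: "'a set \<Rightarrow> ('a \<Rightarrow> 'a \<Rightarrow> bool) \<Rightarrow> ('a \<Rightarrow> nat) \<Rightarrow> bool" where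
  "is_rdf V E f \<longleftrightarrow>
     (\<forall>u\<in>V. f u \<in> {0, 1, 2}) \<and>
     (\<forall>u\<in>V. f u = 0 \<longrightarrow> (\<exists>v\<in>V. E u v \<and> f v = 2))"

definition rdf_weight :: "'a set \<Rightarrow> ('a \<Rightarrow> nat) \<Rightarrow> nat" where
  "rdf_weight V f = (\<Sum>u\<in>V. f u)"

definition roman_domination_number :: "'a set \<Rightarrow> ('a \<Rightarrow> 'a \<Rightarrow> bool) \<Rightarrow> nat" where
  "roman_domination_number V E = Min {rdf_weight V f | f. is_rdf V E f}"

end

theory Submission
  imports Defs
begin

(* Both bounds are proved column by column, column i being the pair v_i, u_i; is_rdf_gp_iff
   turns the Roman domination condition into a condition on each column and its neighbours.

   Lower bound (discharging).  Scan the columns once around the cycle, remembering for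
   v_i, u_{i-1} and u_i whether they carry a 2, are still undominated 0s waiting for a 2 on
   their successor, or are settled.  An explicit potential on these 27 states decreases by 8
   per column at the cost of 7 times the column weight (potential_step, checked
   exhaustively); summing over the cycle (cyclic_telescope) gives 8n <= 7 w(f).

   Upper bound (construction).  A labelling is a cyclic word of columns; the RDF condition
   only looks at windows of five consecutive columns (rdf_of_columns).  Windows glue along
   overlaps of length four, so a block can be pumped (all_windows_pump).  With the period P
   of length 7 and weight 8 and a remainder block T_r for r = n mod 7, write
   n = length T_r + 7q; the word T_r @ P^q has weight ceiling(8n/7), and a few finite
   checks per residue make it an RDF. *)

(* Moving forward by k and moving backward by k (written i + n - k to stay in nat) are
   inverse permutations of {0..<n}; this identifies the neighbours of a vertex. *)
lemma mod_shift_inverse: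
  fixes i j k n :: nat
  assumes "i < n" "j < n" "k \<le> n"
  shows "i = (j + k) mod n \<longleftrightarrow> j = (i + n - k) mod n"
proof
  assume "i = (j + k) mod n"
  then have "(i + (n - k)) mod n = (j + k + (n - k)) mod n" by (simp add: mod_add_left_eq)
  then show "j = (i + n - k) mod n" using assms by simp
next
  assume "j = (i + n - k) mod n"
  then have "(j + k) mod n = (i + n - k + k) mod n" by (simp add: mod_add_left_eq)
  then show "i = (j + k) mod n" using assms by simp
qed

lemma gp_edge_outer:
  assumes "i < n"
  shows "gp_edge n k (False, i) y \<longleftrightarrow>
    y = (False, (i + 1) mod n) \<or> y = (False, (i + n - 1) mod n) \<or> y = (True, i)"
proof
  have pred: "i = (j + 1) mod n \<Longrightarrow> j = (i + n - 1) mod n" if "j < n" for j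
    using mod_shift_inverse[of i n j 1] assms that by simp
  assume "gp_edge n k (False, i) y"
  then show "y = (False, (i + 1) mod n) \<or> y = (False, (i + n - 1) mod n) \<or> y = (True, i)"
    unfolding gp_edge_def by (auto simp: doubleton_eq_iff dest: pred)
next
  let ?j = "(i + n - 1) mod n"
  have "?j < n" "i = (?j + 1) mod n" using mod_shift_inverse[of i n ?j 1] assms by simp_all
  then have "gp_edge n k (False, i) (False, ?j)"
    unfolding gp_edge_def by (intro exI[of _ ?j]) auto
  moreover have "gp_edge n k (False, i) (False, (i + 1) mod n)" "gp_edge n k (False, i) (True, i)"
    unfolding gp_edge_def using assms by blast+
  ultimately show "gp_edge n k (False, i) y"
    if "y = (False, (i + 1) mod n) \<or> y = (False, ?j) \<or> y = (True, i)"
    using that by blast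
qed

lemma gp_edge_inner:
  assumes "i < n" "k \<le> n"
  shows "gp_edge n k (True, i) y \<longleftrightarrow>
    y = (True, (i + k) mod n) \<or> y = (True, (i + n - k) mod n) \<or> y = (False, i)"
proof
  have pred: "i = (j + k) mod n \<Longrightarrow> j = (i + n - k) mod n" if "j < n" for j
    using mod_shift_inverse[OF assms(1) that assms(2)] by simp
  assume "gp_edge n k (True, i) y"
  then show "y = (True, (i + k) mod n) \<or> y = (True, (i + n - k) mod n) \<or> y = (False, i)"
    unfolding gp_edge_def by (auto simp: doubleton_eq_iff dest: pred)
next
  let ?j = "(i + n - k) mod n"
  have "?j < n" "i = (?j + k) mod n" using mod_shift_inverse[of i n ?j k] assms by simp_all
  then have "gp_edge n k (True, i) (True, ?j)"
    unfolding gp_edge_def by (intro exI[of _ ?j]) auto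
  moreover have "gp_edge n k (True, i) (True, (i + k) mod n)" "gp_edge n k (True, i) (False, i)"
    unfolding gp_edge_def using assms by (blast, auto simp: doubleton_eq_iff)
  ultimately show "gp_edge n k (True, i) y"
    if "y = (True, (i + k) mod n) \<or> y = (True, ?j) \<or> y = (False, i)"
    using that by blast
qed

definition gp_local_rdf :: "nat \<Rightarrow> nat \<Rightarrow> (bool \<times> nat \<Rightarrow> nat) \<Rightarrow> nat \<Rightarrow> bool" where
  "gp_local_rdf n k f i \<longleftrightarrow> f (False, i) \<le> 2 \<and> f (True, i) \<le> 2 \<and>
     (f (False, i) = 0 \<longrightarrow>
        f (False, (i + 1) mod n) = 2 \<or> f (False, (i + n - 1) mod n) = 2 \<or> f (True, i) = 2) \<and>
     (f (True, i) = 0 \<longrightarrow>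
        f (True, (i + k) mod n) = 2 \<or> f (True, (i + n - k) mod n) = 2 \<or> f (False, i) = 2)"

lemma is_rdf_gp_iff:
  assumes "k \<le> n"
  shows "is_rdf (gp_vertices n) (gp_edge n k) f \<longleftrightarrow> (\<forall>i<n. gp_local_rdf n k f i)"
proof -
  have outer: "(\<exists>v\<in>gp_vertices n. gp_edge n k (False, i) v \<and> f v = 2) \<longleftrightarrow>
      f (False, (i + 1) mod n) = 2 \<or> f (False, (i + n - 1) mod n) = 2 \<or> f (True, i) = 2"
    if "i < n" for i
    using that by (simp add: gp_edge_outer gp_vertices_def Bex_def ex_bool_eq ex_disj_distrib
        conj_disj_distribL conj_disj_distribR disj_commute disj_left_commute)
  have inner: "(\<exists>v\<in>gp_vertices n. gp_edge n k (True, i) v \<and> f v = 2) \<longleftrightarrow>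
      f (True, (i + k) mod n) = 2 \<or> f (True, (i + n - k) mod n) = 2 \<or> f (False, i) = 2"
    if "i < n" for i
    using that assms by (simp add: gp_edge_inner gp_vertices_def Bex_def ex_bool_eq ex_disj_distrib
        conj_disj_distribL conj_disj_distribR disj_commute disj_left_commute)
  have "(\<forall>u\<in>gp_vertices n. P u) \<longleftrightarrow> (\<forall>i<n. P (False, i) \<and> P (True, i))" for P
    unfolding gp_vertices_def by (metis (full_types) SigmaE SigmaI UNIV_I lessThan_iff)
  then show ?thesis
    unfolding is_rdf_def gp_local_rdf_def using outer inner by auto
qed

lemma rdf_weight_gp:
  "rdf_weight (gp_vertices n) f = (\<Sum>i<n. f (False, i) + f (True, i))"
proof -
  have "rdf_weight (gp_vertices n) f = (\<Sum>b\<in>UNIV. \<Sum>i<n. f (b, i))"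
    unfolding rdf_weight_def gp_vertices_def by (simp add: sum.cartesian_product)
  also have "\<dots> = (\<Sum>i<n. f (False, i)) + (\<Sum>i<n. f (True, i))"
    by (simp add: UNIV_bool)
  finally show ?thesis by (simp add: sum.distrib)
qed

lemma sum_rotate:
  fixes n :: nat
  assumes "0 < n"
  shows "(\<Sum>i<n. h ((i + 1) mod n)) = (\<Sum>i<n. h i :: 'a :: comm_monoid_add)"
proof -
  obtain m where m: "n = Suc m" using assms by (cases n) auto
  have "(\<Sum>i<Suc m. h ((i + 1) mod Suc m)) = (\<Sum>i<m. h (Suc i)) + h 0"
    by (simp add: sum.lessThan_Suc)
  also have "\<dots> = (\<Sum>i<Suc m. h i)"
    by (subst sum.lessThan_Suc_shift) (simp add: add.commute)
  finally show ?thesis using m by simp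
qed

lemma cyclic_telescope:
  fixes g w :: "nat \<Rightarrow> int"
  assumes "0 < n" and step: "\<And>i. i < n \<Longrightarrow> g ((i + 1) mod n) + c \<le> w ((i + 1) mod n) + g i"
  shows "int n * c \<le> (\<Sum>i<n. w i)"
proof -
  have "(\<Sum>i<n. g ((i + 1) mod n) + c) \<le> (\<Sum>i<n. w ((i + 1) mod n) + g i)"
    using step by (intro sum_mono) simp
  then have "(\<Sum>i<n. g i) + int n * c \<le> (\<Sum>i<n. w i) + (\<Sum>i<n. g i)"
    by (simp only: sum.distrib sum_rotate[OF assms(1)]) (simp add: mult.commute)
  then show ?thesis by simp
qed

(* Status of a vertex after its column has been scanned, given its own value, the value
   of its predecessor on its cycle and the value of its spoke partner: 2 if it carries a 2,
   0 if it is an undominated 0 (so its successor on its cycle must carry a 2), else 1. *)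
definition status :: "nat \<Rightarrow> nat \<Rightarrow> nat \<Rightarrow> nat" where
  "status own left spoke =
     (if own = 2 then 2 else if own = 0 \<and> left \<noteq> 2 \<and> spoke \<noteq> 2 then 0 else 1)"

(* An explicit potential on the 27 scan states (status of v_i, of u_{i-1}, of u_i), indexed
   in base 3; by potential_step it certifies an average cost of at least 8/7 per column. *)
definition potential :: "nat \<Rightarrow> nat \<Rightarrow> nat \<Rightarrow> int" where
  "potential a b c = [-26, -19, 0, -19, -16, 0, -15, -15, 0, -19, -12, -13, -18, -11, -7,
     -8, -8, -7, 0, -13, -6, 0, -10, 0, 0, -1, 0] ! (9 * a + 3 * b + c)"

lemma potential_step:
  fixes a b c x y :: nat
  assumes "a \<le> 2" "b \<le> 2" "c \<le> 2" "x \<le> 2" "y \<le> 2"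
    and "a = 0 \<longrightarrow> x = 2" "b = 0 \<longrightarrow> y = 2"
  shows "potential (status x a y) c (status y b x) + 8 \<le> 7 * int (x + y) + potential a b c"
proof -
  have three: "v = 0 \<or> v = 1 \<or> v = 2" if "v \<le> 2" for v :: nat
    using that by auto
  show ?thesis
    using three[OF assms(1)] three[OF assms(2)] three[OF assms(3)] three[OF assms(4)]
      three[OF assms(5)] assms(6,7)
    by (elim disjE) (simp_all add: potential_def status_def)
qed

definition outer_status :: "nat \<Rightarrow> (bool \<times> nat \<Rightarrow> nat) \<Rightarrow> nat \<Rightarrow> nat" where
  "outer_status n f i = status (f (False, i)) (f (False, (i + n - 1) mod n)) (f (True, i))"

definition inner_status :: "nat \<Rightarrow> (bool \<times> nat \<Rightarrow> nat) \<Rightarrow> nat \<Rightarrow> nat" where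
  "inner_status n f i = status (f (True, i)) (f (True, (i + n - 2) mod n)) (f (False, i))"

definition scan_potential :: "nat \<Rightarrow> (bool \<times> nat \<Rightarrow> nat) \<Rightarrow> nat \<Rightarrow> int" where
  "scan_potential n f i =
     potential (outer_status n f i) (inner_status n f ((i + n - 1) mod n)) (inner_status n f i)"

(* One scan step around the cycle: the statuses at column i + 1 are obtained from those at
   column i by the transition of potential_step, whose obligations are the RDF condition. *)
lemma scan_potential_step:
  assumes n: "2 \<le> n" and rdf: "is_rdf (gp_vertices n) (gp_edge n 2) f" and i: "i < n"
  defines "s \<equiv> (i + 1) mod n"
  shows "scan_potential n f s + 8 \<le> 7 * int (f (False, s) + f (True, s)) + scan_potential n f i"
proof -
  let ?p = "(i + n - 1) mod n"
  have local: "gp_local_rdf n 2 f j" if "j < n" for j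
    using rdf n that by (simp add: is_rdf_gp_iff)
  have s_bound: "s < n" and p_bound: "?p < n" using n by (simp_all add: s_def)
  have s_pred: "(s + n - 1) mod n = i"
    using mod_shift_inverse[of s n i 1] s_bound i n by (simp add: s_def)
  have "(?p + 2) mod n = (i + n - 1 + 2) mod n"
    by (rule mod_add_left_eq)
  also have "i + n - 1 + 2 = (i + 1) + n" using n by simp
  also have "((i + 1) + n) mod n = s" unfolding s_def by (rule mod_add_self2)
  finally have p_succ2: "(?p + 2) mod n = s" .
  then have s_pred2: "(s + n - 2) mod n = ?p"
    using mod_shift_inverse[of s n ?p 2] s_bound p_bound n by simp
  have outer_s: "outer_status n f s = status (f (False, s)) (outer_status n f i) (f (True, s))"
    unfolding outer_status_def s_pred by (simp add: status_def)
  have inner_s: "inner_status n f s = status (f (True, s)) (inner_status n f ?p) (f (False, s))"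
    unfolding inner_status_def s_pred2 by (simp add: status_def)
  have outer_needs: "outer_status n f i = 0 \<longrightarrow> f (False, s) = 2"
    using local[OF i] by (auto simp: gp_local_rdf_def outer_status_def status_def s_def)
  have inner_needs: "inner_status n f ?p = 0 \<longrightarrow> f (True, s) = 2"
    using local[OF p_bound] p_succ2 by (auto simp: gp_local_rdf_def inner_status_def status_def)
  have "potential (status (f (False, s)) (outer_status n f i) (f (True, s))) (inner_status n f i)
          (status (f (True, s)) (inner_status n f ?p) (f (False, s))) + 8
        \<le> 7 * int (f (False, s) + f (True, s))
           + potential (outer_status n f i) (inner_status n f ?p) (inner_status n f i)"
    using local[OF s_bound] outer_needs inner_needs
    by (intro potential_step) (auto simp: gp_local_rdf_def outer_status_def inner_status_def status_def)
  then show ?thesis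
    unfolding scan_potential_def outer_s inner_s s_pred by simp
qed

lemma rdf_weight_lower_bound:
  assumes n: "2 \<le> n" and rdf: "is_rdf (gp_vertices n) (gp_edge n 2) f"
  shows "8 * n \<le> 7 * rdf_weight (gp_vertices n) f"
proof -
  have "int n * 8 \<le> (\<Sum>i<n. 7 * int (f (False, i) + f (True, i)))"
    using n scan_potential_step[OF n rdf]
    by (intro cyclic_telescope[where g = "scan_potential n f"]) simp_all
  also have "\<dots> = 7 * int (rdf_weight (gp_vertices n) f)"
    by (simp add: rdf_weight_gp sum_distrib_left)
  finally show ?thesis by linarith
qed

definition all_windows :: "('a \<Rightarrow> 'a \<Rightarrow> 'a \<Rightarrow> 'a \<Rightarrow> 'a \<Rightarrow> bool) \<Rightarrow> 'a list \<Rightarrow> bool" where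
  "all_windows W xs \<longleftrightarrow>
     (\<forall>i < length xs - 4. W (xs ! i) (xs ! (i + 1)) (xs ! (i + 2)) (xs ! (i + 3)) (xs ! (i + 4)))"

lemma all_windows_short: "length xs < 5 \<Longrightarrow> all_windows W xs"
  by (simp add: all_windows_def)

lemma all_windows_Cons5:
  "all_windows W (a # b # c # d # e # xs) \<longleftrightarrow> W a b c d e \<and> all_windows W (b # c # d # e # xs)"
  by (simp add: all_windows_def All_less_Suc2)

(* Gluing: a window of xs @ ys @ zs meeting both xs and zs would contain all of ys, so for
   length ys >= 4 every window lies in xs @ ys or in ys @ zs. *)
lemma all_windows_glue:
  assumes "4 \<le> length ys" "all_windows W (xs @ ys)" "all_windows W (ys @ zs)"
  shows "all_windows W (xs @ ys @ zs)"
  unfolding all_windows_def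
proof (intro allI impI)
  fix i assume i: "i < length (xs @ ys @ zs) - 4"
  show "W ((xs @ ys @ zs) ! i) ((xs @ ys @ zs) ! (i + 1)) ((xs @ ys @ zs) ! (i + 2))
          ((xs @ ys @ zs) ! (i + 3)) ((xs @ ys @ zs) ! (i + 4))"
  proof (cases "i < length xs")
    case True
    have same: "(xs @ ys @ zs) ! (i + j) = (xs @ ys) ! (i + j)" if "j \<le> 4" for j
      using that assms(1) True by (auto simp: nth_append)
    have "i < length (xs @ ys) - 4" using True assms(1) by simp
    then show ?thesis
      using assms(2) same[of 0] same[of 1] same[of 2] same[of 3] same[of 4]
      unfolding all_windows_def by simp
  next
    case False
    then have shift: "(xs @ ys @ zs) ! (i + j) = (ys @ zs) ! (i - length xs + j)" for j
      by (simp add: nth_append)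
    have "i - length xs < length (ys @ zs) - 4" using False i by simp
    then show ?thesis
      using assms(3) shift[of 0] shift[of 1] shift[of 2] shift[of 3] shift[of 4]
      unfolding all_windows_def by simp
  qed
qed

(* Pumping a block P: the windows of X @ P^(m+1) @ Y are already windows of X @ P, P @ P
   or P @ Y. *)
lemma all_windows_pump:
  assumes "4 \<le> length P" "all_windows W (X @ P)" "all_windows W (P @ P)" "all_windows W (P @ Y)"
  shows "all_windows W (X @ concat (replicate (Suc m) P) @ Y)"
  using assms(2)
proof (induction m arbitrary: X)
  case 0
  then show ?case using all_windows_glue[OF assms(1)] assms(4) by simp
next
  case (Suc m)
  have "all_windows W (P @ concat (replicate (Suc m) P) @ Y)"
    using Suc.IH assms(3) .
  then show ?case using all_windows_glue[OF assms(1) Suc.prems] by simp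
qed

(* A cyclic word is read linearly by adding its last two letters in front and its first
   two letters at the end; then every cyclic window becomes a linear one. *)
definition cyclic_padding :: "'a list \<Rightarrow> 'a list" where
  "cyclic_padding w = drop (length w - 2) w @ w @ take 2 w"

lemma cyclic_padding_nth:
  assumes "2 \<le> length w" "m < length w + 4"
  shows "cyclic_padding w ! m = w ! ((m + length w - 2) mod length w)"
proof -
  let ?n = "length w"
  consider "m < 2" | "2 \<le> m" "m < ?n + 2" | "?n + 2 \<le> m" by linarith
  then show ?thesis
  proof cases
    case 1
    then have "(m + ?n - 2) mod ?n = ?n - 2 + m" using assms by simp
    then show ?thesis using 1 assms by (simp add: cyclic_padding_def nth_append)
  next
    case 2
    then have "(m + ?n - 2) mod ?n = m - 2" using assms by (simp add: mod_if)
    then show ?thesis using 2 assms by (simp add: cyclic_padding_def nth_append)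
  next
    case 3
    then have "(m + ?n - 2) mod ?n = m - ?n - 2" using assms by (simp add: mod_if)
    then show ?thesis using 3 assms by (simp add: cyclic_padding_def nth_append)
  qed
qed

(* A labelling of P(n,2) given column by column: (value of v_i, value of u_i). *)
type_synonym column = "nat \<times> nat"

definition column_labelling :: "column list \<Rightarrow> bool \<times> nat \<Rightarrow> nat" where
  "column_labelling w = (\<lambda>(inner, i). if inner then snd (w ! i) else fst (w ! i))"

definition gp2_window :: "column \<Rightarrow> column \<Rightarrow> column \<Rightarrow> column \<Rightarrow> column \<Rightarrow> bool" where
  "gp2_window l2 l1 x r1 r2 \<longleftrightarrow>
     (fst x = 0 \<longrightarrow> fst r1 = 2 \<or> fst l1 = 2 \<or> snd x = 2) \<and>
     (snd x = 0 \<longrightarrow> snd r2 = 2 \<or> snd l2 = 2 \<or> fst x = 2)"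

definition small_column :: "column \<Rightarrow> bool" where
  "small_column c \<longleftrightarrow> fst c \<le> 2 \<and> snd c \<le> 2"

lemma rdf_of_columns:
  assumes n: "2 \<le> length w" and small: "\<forall>c\<in>set w. small_column c"
    and windows: "all_windows gp2_window (cyclic_padding w)"
  shows "is_rdf (gp_vertices (length w)) (gp_edge (length w) 2) (column_labelling w)"
proof -
  let ?n = "length w" and ?pad = "cyclic_padding w"
  have "gp_local_rdf ?n 2 (column_labelling w) i" if i: "i < ?n" for i
  proof -
    have pad: "?pad ! (i + j) = w ! ((i + j + ?n - 2) mod ?n)" if "j \<le> 4" for j
      using cyclic_padding_nth[OF n] i that by simp
    have wrap: "(i + (d + 2) + ?n - 2) mod ?n = (i + d) mod ?n" for d
    proof -
      have "i + (d + 2) + ?n - 2 = (i + d) + ?n" using n by simp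
      then show ?thesis by simp
    qed
    have p0: "?pad ! i = w ! ((i + ?n - 2) mod ?n)" using pad[of 0] by simp
    have p1: "?pad ! (i + 1) = w ! ((i + ?n - 1) mod ?n)" using pad[of 1] n by simp
    have p2: "?pad ! (i + 2) = w ! i" using pad[of 2] wrap[of 0] i by simp
    have p3: "?pad ! (i + 3) = w ! ((i + 1) mod ?n)" using pad[of 3] wrap[of 1] by simp
    have p4: "?pad ! (i + 4) = w ! ((i + 2) mod ?n)" using pad[of 4] wrap[of 2] by simp
    have "i < length ?pad - 4" using i n by (simp add: cyclic_padding_def)
    then have "gp2_window (?pad ! i) (?pad ! (i + 1)) (?pad ! (i + 2)) (?pad ! (i + 3)) (?pad ! (i + 4))"
      using windows unfolding all_windows_def by blast
    then have "gp2_window (w ! ((i + ?n - 2) mod ?n)) (w ! ((i + ?n - 1) mod ?n)) (w ! i)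
        (w ! ((i + 1) mod ?n)) (w ! ((i + 2) mod ?n))"
      by (simp only: p0 p1 p2 p3 p4)
    moreover have "small_column (w ! i)" using small i by simp
    ultimately show ?thesis
      by (simp add: gp_local_rdf_def gp2_window_def small_column_def column_labelling_def)
  qed
  then show ?thesis using n by (simp add: is_rdf_gp_iff)
qed

definition column_weight :: "column \<Rightarrow> nat" where
  "column_weight c = fst c + snd c"

lemma rdf_weight_columns:
  "rdf_weight (gp_vertices (length w)) (column_labelling w) = sum_list (map column_weight w)"
  by (simp add: rdf_weight_gp sum_list_sum_nth atLeast0LessThan column_weight_def
      column_labelling_def)

lemma cyclic_padding_periodic:
  assumes "2 \<le> length P"
  shows "cyclic_padding (T @ concat (replicate (Suc m) P))
    = (drop (length P - 2) P @ T) @ concat (replicate (Suc m) P) @ take 2 (T @ P)"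
proof -
  have last: "T @ concat (replicate (Suc m) P) = (T @ concat (replicate m P)) @ P"
    by (simp add: replicate_append_same[symmetric])
  have "drop (length (T @ concat (replicate (Suc m) P)) - 2) (T @ concat (replicate (Suc m) P))
      = drop (length P - 2) P"
    unfolding last using assms by simp
  moreover have "take 2 (T @ concat (replicate (Suc m) P)) = take 2 (T @ P)"
    using assms by (simp add: take_append)
  ultimately show ?thesis by (simp add: cyclic_padding_def)
qed

lemma rdf_periodic:
  assumes P: "4 \<le> length P" and small: "\<forall>c\<in>set (T @ P). small_column c"
    and head: "all_windows gp2_window (drop (length P - 2) P @ T @ P)"
    and period: "all_windows gp2_window (P @ P)"
    and tail: "all_windows gp2_window (P @ take 2 (T @ P))"
  shows "is_rdf (gp_vertices (length T + Suc m * length P)) (gp_edge (length T + Suc m * length P) 2)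
           (column_labelling (T @ concat (replicate (Suc m) P)))"
proof -
  let ?w = "T @ concat (replicate (Suc m) P)"
  have "cyclic_padding ?w
      = (drop (length P - 2) P @ T) @ concat (replicate (Suc m) P) @ take 2 (T @ P)"
    using P by (intro cyclic_padding_periodic) simp
  moreover have "all_windows gp2_window
      ((drop (length P - 2) P @ T) @ concat (replicate (Suc m) P) @ take 2 (T @ P))"
    using head by (intro all_windows_pump[OF P _ period tail]) simp
  ultimately have windows: "all_windows gp2_window (cyclic_padding ?w)" by simp
  have small_w: "\<forall>c\<in>set ?w. small_column c" using small by auto
  have len: "length ?w = length T + Suc m * length P"
    by (simp add: length_concat sum_list_replicate)
  then have "2 \<le> length ?w" using P by simp
  from rdf_of_columns[OF this small_w windows] show ?thesis unfolding len .
qed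

lemma weight_periodic:
  "sum_list (map column_weight (T @ concat (replicate q P)))
     = sum_list (map column_weight T) + q * sum_list (map column_weight P)"
  by (induction q) auto

definition period :: "column list" where
  "period = [(0, 2), (1, 0), (0, 0), (2, 0), (0, 0), (1, 0), (0, 2)]"

definition remainder_blocks :: "column list list" where
  "remainder_blocks =
     [[],
      [(0, 2)],
      [(0, 2), (0, 0), (2, 0), (0, 1), (0, 1), (2, 0), (0, 0), (1, 0), (0, 2)],
      [(0, 2), (0, 0), (2, 0), (0, 0), (0, 2), (0, 2), (0, 0), (2, 0), (0, 0), (0, 2)],
      [(0, 2), (0, 0), (2, 0), (0, 0), (0, 2), (0, 2), (0, 0), (2, 0), (0, 0), (1, 0), (0, 2)],
      [(0, 2), (0, 0), (2, 0), (0, 0), (0, 2)],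
      [(0, 2), (0, 0), (2, 0), (0, 0), (1, 0), (0, 2)]]"

(* What is needed of the remainder block for residue r: the right length, weight at most
   ceiling of 8/7 of its length, and the finite window checks (cyclic ones if it is used alone). *)
definition good_remainder :: "nat \<Rightarrow> column list \<Rightarrow> bool" where
  "good_remainder r T \<longleftrightarrow>
     (length T = r \<or> r < 5 \<and> length T = r + 7) \<and>
     7 * sum_list (map column_weight T) < 8 * length T + 7 \<and>
     list_all small_column T \<and>
     all_windows gp2_window (drop 5 period @ T @ period) \<and>
     all_windows gp2_window (period @ take 2 (T @ period)) \<and>
     (5 \<le> length T \<longrightarrow> all_windows gp2_window (cyclic_padding T))"

lemma period_facts:
  "length period = 7" "sum_list (map column_weight period) = 8" "list_all small_column period"
  "all_windows gp2_window (period @ period)"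
  by (simp_all add: period_def column_weight_def small_column_def all_windows_Cons5
      all_windows_short gp2_window_def)

lemma remainder_blocks_good: "r < 7 \<Longrightarrow> good_remainder r (remainder_blocks ! r)"
  by (simp add: less_Suc_eq numeral_eq_Suc, elim disjE)
    (simp_all add: good_remainder_def remainder_blocks_def period_def column_weight_def
      small_column_def all_windows_Cons5 all_windows_short gp2_window_def cyclic_padding_def)

lemma remainder_split:
  fixes n t :: nat
  assumes n: "5 \<le> n" and t: "t = n mod 7 \<or> n mod 7 < 5 \<and> t = n mod 7 + 7"
  shows "\<exists>q. n = t + 7 * q"
proof -
  have n_split: "n = 7 * (n div 7) + n mod 7" by simp
  show ?thesis
  proof (cases "t = n mod 7")
    case True
    then show ?thesis using n_split by (intro exI[of _ "n div 7"]) simp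
  next
    case False
    with t have "n mod 7 < 5" "t = n mod 7 + 7" by auto
    moreover have "n div 7 \<noteq> 0" using n \<open>n mod 7 < 5\<close> by (cases "n < 7") auto
    ultimately show ?thesis using n_split by (intro exI[of _ "n div 7 - 1"]) (simp add: algebra_simps)
  qed
qed

lemma rdf_upper_construction:
  assumes n: "5 \<le> n"
  obtains f where "is_rdf (gp_vertices n) (gp_edge n 2) f"
    and "7 * rdf_weight (gp_vertices n) f < 8 * n + 7"
proof -
  define r where "r = n mod 7"
  define T where "T = remainder_blocks ! r"
  have good: "good_remainder r T" unfolding T_def r_def by (intro remainder_blocks_good) simp
  then have lenT: "length T = r \<or> r < 5 \<and> length T = r + 7"
    and weightT: "7 * sum_list (map column_weight T) < 8 * length T + 7"
    by (simp_all add: good_remainder_def)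
  obtain q where q: "n = length T + 7 * q"
    using remainder_split[OF n lenT[unfolded r_def]] by blast
  show ?thesis
  proof (cases q)
    case 0
    then have "n = length T" using q by simp
    moreover have "all_windows gp2_window (cyclic_padding T)" "\<forall>c\<in>set T. small_column c"
      using good n \<open>n = length T\<close> by (auto simp: good_remainder_def list_all_iff)
    ultimately show ?thesis
      using rdf_of_columns[of T] rdf_weight_columns[of T] weightT n
      by (intro that[of "column_labelling T"]) auto
  next
    case (Suc m)
    let ?w = "T @ concat (replicate (Suc m) period)"
    have len: "length T + Suc m * length period = n" using q Suc period_facts(1) by simp
    have "is_rdf (gp_vertices (length T + Suc m * length period))
        (gp_edge (length T + Suc m * length period) 2) (column_labelling ?w)"
      using good period_facts
      by (intro rdf_periodic) (auto simp: good_remainder_def list_all_iff)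
    then have rdf: "is_rdf (gp_vertices n) (gp_edge n 2) (column_labelling ?w)"
      unfolding len .
    have "length ?w = n" using len by (simp add: length_concat sum_list_replicate)
    then have "rdf_weight (gp_vertices n) (column_labelling ?w) = sum_list (map column_weight ?w)"
      using rdf_weight_columns[of ?w] by simp
    also have "\<dots> = sum_list (map column_weight T) + Suc m * 8"
      by (simp only: weight_periodic period_facts(2))
    finally have "7 * rdf_weight (gp_vertices n) (column_labelling ?w) < 8 * n + 7"
      using weightT q Suc by simp
    with rdf show ?thesis by (rule that)
  qed
qed

lemma roman_domination_number_eqI:
  assumes "finite V" "is_rdf V E f"
    and minimal: "\<And>g. is_rdf V E g \<Longrightarrow> rdf_weight V f \<le> rdf_weight V g"
  shows "roman_domination_number V E = rdf_weight V f"
proof -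
  let ?S = "{rdf_weight V g | g. is_rdf V E g}"
  have "rdf_weight V g \<le> 2 * card V" if "is_rdf V E g" for g
  proof -
    have "\<forall>u\<in>V. g u \<le> 2" using that unfolding is_rdf_def by auto
    then show ?thesis
      unfolding rdf_weight_def using sum_bounded_above[of V g 2] by simp
  qed
  then have "?S \<subseteq> {..2 * card V}" by auto
  then have "finite ?S" by (rule finite_subset) simp
  moreover have "rdf_weight V f \<in> ?S" using assms(2) by blast
  moreover have "rdf_weight V f \<le> y" if "y \<in> ?S" for y
    using that minimal by blast
  ultimately show ?thesis
    unfolding roman_domination_number_def by (intro Min_eqI)
qed

lemma nat_ceiling_divide_eqI:
  fixes a d w :: nat
  assumes "a \<le> d * w" "d * w < a + d"
  shows "nat \<lceil>real a / real d\<rceil> = w"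
proof -
  have d: "0 < d" using assms by linarith
  have "\<lceil>real a / real d\<rceil> = int w"
  proof (rule ceiling_unique)
    have "real (d * w) < real (a + d)" using assms(2) by linarith
    then show "real_of_int (int w) - 1 < real a / real d"
      using d by (simp add: field_simps)
    have "real a \<le> real (d * w)" using assms(1) by linarith
    then show "real a / real d \<le> real_of_int (int w)"
      using d by (simp add: field_simps)
  qed
  then show ?thesis by simp
qed

theorem theorem2p12:
  fixes n :: nat
  assumes "n \<ge> 5"
  shows "roman_domination_number (gp_vertices n) (gp_edge n 2) = nat (ceiling (8 * real n / 7))"
proof -
  obtain f where rdf: "is_rdf (gp_vertices n) (gp_edge n 2) f"
    and light: "7 * rdf_weight (gp_vertices n) f < 8 * n + 7"
    using rdf_upper_construction[OF assms] .
  have lower: "8 * n \<le> 7 * rdf_weight (gp_vertices n) g"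
    if "is_rdf (gp_vertices n) (gp_edge n 2) g" for g
    using rdf_weight_lower_bound[OF _ that] assms by simp
  have minimal: "rdf_weight (gp_vertices n) f \<le> rdf_weight (gp_vertices n) g"
    if "is_rdf (gp_vertices n) (gp_edge n 2) g" for g
    using lower[OF that] light by linarith
  have "finite (gp_vertices n)" by (simp add: gp_vertices_def)
  then have "roman_domination_number (gp_vertices n) (gp_edge n 2) = rdf_weight (gp_vertices n) f"
    using rdf minimal by (rule roman_domination_number_eqI)
  also have "\<dots> = nat \<lceil>real (8 * n) / real 7\<rceil>"
    using lower[OF rdf] light by (intro nat_ceiling_divide_eqI[symmetric]) simp_all
  finally show ?thesis by simp
qed

end
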